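(* Let $S,T\subseteq\mathbb{Z}_{>0}$ be finite and $S'\subseteq S$. Then $T\triangleleft S'\subseteq T\triangleleft S$.
   Context: For finite $S,T\subseteq\mathbb{Z}_{>0}$, $T\triangleleft S$ is computed by going through the elements of $S$ from largest to smallest; each $s$ picks the largest element of $T$ that is less than $s$ and not yet picked (if one exists); $T\triangleleft S$ is the set of picked elements. *)

theory Defs
  imports Main
begin

(* One step of the procedure: element s picks the largest not-yet-picked
   element of T that is less than s (if one exists).
   State: (elements of T not yet picked, picked elements). *)
definition pick_step :: "nat \<Rightarrow> nat set \<times> nat set \<Rightarrow> nat set \<times> nat set" where
  "pick_step s st =
     (let C = {t \<in> fst st. t < s} in
      if C = {} then st
      else (fst st - {Max C}, insert (Max C) (snd st)))"

definition tri :: "nat set \<Rightarrow> nat set \<Rightarrow> nat set" (infix "\<triangleleft>" 60) where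
  "T \<triangleleft> S = snd (fold pick_step (rev (sorted_list_of_set S)) (T, {}))"

end

theory Submission
  imports Defs
begin

(* Run both procedures in lockstep along the elements of S (from largest to smallest),
   the one for S' simply skipping the elements outside S'. Throughout, the elements picked
   for S' form a subset of those picked for S. This survives every step: when s picks its
   candidate m for S', either m is already picked for S, or m is still available there and,
   the available elements for S being fewer, m is also the largest one below s. *)

definition pick_state :: "nat set \<Rightarrow> nat set \<times> nat set \<Rightarrow> bool" where
  "pick_state T st \<longleftrightarrow> fst st = T - snd st"

lemma pick_state_pick_step: "pick_state T st \<Longrightarrow> pick_state T (pick_step s st)"
  unfolding pick_state_def pick_step_def Let_def by auto

lemma picked_subset_pick_step: "snd st \<subseteq> snd (pick_step s st)"
  unfolding pick_step_def Let_def by auto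

lemma pick_step_mono:
  assumes "pick_state T a" and "pick_state T b" and "snd b \<subseteq> snd a"
  shows "snd (pick_step s b) \<subseteq> snd (pick_step s a)"
proof (cases "{t \<in> fst b. t < s} = {}")
  case True
  then show ?thesis
    using assms(3) picked_subset_pick_step[of a s] by (simp add: pick_step_def)
next
  case False
  define C where "C = {t \<in> fst a. t < s}"
  define m where "m = Max {t \<in> fst b. t < s}"
  have candidates_finite: "finite {t \<in> X. t < s}" for X :: "nat set"
    by (rule finite_subset[of _ "{..<s}"]) auto
  have "m \<in> {t \<in> fst b. t < s}"
    using Max_in[OF candidates_finite False] by (simp add: m_def)
  have m_max: "t \<le> m" if "t \<in> {t \<in> fst b. t < s}" for t
    using Max_ge[OF candidates_finite that] by (simp add: m_def)
  have C_subset: "C \<subseteq> {t \<in> fst b. t < s}"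
    using assms unfolding C_def pick_state_def by auto
  have "m \<in> snd (pick_step s a)"
  proof (cases "m \<in> snd a")
    case True
    then show ?thesis using picked_subset_pick_step by blast
  next
    case False
    with \<open>m \<in> {t \<in> fst b. t < s}\<close> assms have "m \<in> C"
      unfolding C_def pick_state_def by auto
    then have "C \<noteq> {}" by blast
    have "Max C = m"
    proof (rule antisym)
      show "Max C \<le> m"
        using Max_in[OF _ \<open>C \<noteq> {}\<close>] C_subset m_max candidates_finite by (auto simp: C_def)
      show "m \<le> Max C"
        using Max_ge[OF _ \<open>m \<in> C\<close>] candidates_finite by (simp add: C_def)
    qed
    then show ?thesis using \<open>C \<noteq> {}\<close> by (auto simp: pick_step_def Let_def C_def)
  qed
  moreover have "snd (pick_step s b) = insert m (snd b)"
    using False by (auto simp: pick_step_def Let_def m_def)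
  ultimately show ?thesis
    using assms(3) picked_subset_pick_step[of a s] by auto
qed

lemma fold_pick_step_filter_mono:
  assumes "pick_state T a" and "pick_state T b" and "snd b \<subseteq> snd a"
  shows "snd (fold pick_step (filter P xs) b) \<subseteq> snd (fold pick_step xs a)"
  using assms
proof (induction xs arbitrary: a b)
  case Nil
  then show ?case by simp
next
  case (Cons x xs)
  show ?case
  proof (cases "P x")
    case True
    then show ?thesis
      using Cons.IH[of "pick_step x a" "pick_step x b"] Cons.prems
      by (simp add: pick_state_pick_step pick_step_mono)
  next
    case False
    then show ?thesis
      using Cons.IH[of "pick_step x a" b] Cons.prems picked_subset_pick_step[of a x]
      by (simp add: pick_state_pick_step)
  qed
qed

lemma sorted_list_of_set_subset:
  assumes "finite S" and "S' \<subseteq> S"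
  shows "sorted_list_of_set S' = filter (\<lambda>x. x \<in> S') (sorted_list_of_set S)"
  using assms finite_subset[OF assms(2,1)]
  by (intro sorted_distinct_set_unique) (auto intro: sorted_wrt_filter)

theorem lemma4p14:
  fixes S T S' :: "nat set"
  assumes "finite S" and "finite T"
    and "\<forall>x\<in>S. x > 0" and "\<forall>x\<in>T. x > 0"
    and "S' \<subseteq> S"
  shows "T \<triangleleft> S' \<subseteq> T \<triangleleft> S"
proof -
  have "rev (sorted_list_of_set S') = filter (\<lambda>x. x \<in> S') (rev (sorted_list_of_set S))"
    using sorted_list_of_set_subset[OF assms(1,5)] by (simp add: rev_filter)
  moreover have "pick_state T (T, {})"
    by (simp add: pick_state_def)
  ultimately show ?thesis
    unfolding tri_def
    using fold_pick_step_filter_mono[of T "(T, {})" "(T, {})" "\<lambda>x. x \<in> S'"] by simp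
qed

end
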